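(* Let $(V,E,\sigma)$ be an influence graph and let $\mu : V \rightarrow \{+,-\}$ be a (partial) vertex labeling. If $X$ is an answer set of the disjunctive logic program $P_D\cup\tau((V,E,\sigma),\mu)$, then $\{i \mid \mathit{active}(i)\in X\}$ is a Minimal Inconsistent Core.
   Context: An influence graph is a triple $(V,E,\sigma)$ where $V$ is a finite set of vertices, $E\subseteq V\times V$ is a set of directed edges (an edge from $j$ to $i$ is written $j\rightarrow i$), and $\sigma : E\rightarrow\{+,-\}$ is a partial labeling of the edges; in addition, some vertices of $V$ are designated as input vertices. Signs are multiplied as numbers ($++=--=+$, $+-=-+=-$). Given a partial vertex labeling $\mu:V\rightarrow\{+,-\}$ and total labelings $\sigma':E\rightarrow\{+,-\}$, $\mu':V\rightarrow\{+,-\}$, the value $\mu'(i)$ is called consistent if there is an edge $j\rightarrow i$ in $E$ with $\mu'(i)=\mu'(j)\sigma'(j,i)$. A subset $W\subseteq V$ is a Minimal Inconsistent Core (MIC) if (1) for all total extensions $\sigma'$ of $\sigma$ and $\mu'$ of $\mu$ there is some non-input vertex $i\in W$ such that $\mu'(i)$ is inconsistent, and (2) for every proper subset $W'\subset W$ there are total extensions $\sigma'$ of $\sigma$ and $\mu'$ of $\mu$ such that $\mu'(i)$ is consistent for every non-input vertex $i\in W'$. Answer set semantics: a disjunctive logic program is a set of rules $a_1;\dots;a_l \leftarrow b_1,\dots,b_m,\mathit{not}\ c_1,\dots,\mathit{not}\ c_n$ (with $l=0$ giving an integrity constraint, whose empty head is false). Rules with (capitalized) variables stand for all their ground instances obtained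 by substituting constants occurring in the program; a built-in comparison such as $S\neq T$ keeps only instances where the substituted constants differ. A conditional literal $\mathit{opposite}(U,V):\mathit{edge}(U,V)$ in a body, for fixed $V=v$, stands for the conjunction of all atoms $\mathit{opposite}(u,v)$ such that $\mathit{edge}(u,v)$ is a fact of the program (the empty conjunction if there is none). For a set $X$ of ground atoms, the reduct $P^X$ consists of $\{a_1,\dots,a_l\}\leftarrow b_1,\dots,b_m$ for each ground rule with $\{c_1,\dots,c_n\}\cap X=\emptyset$; $X$ is an answer set of $P$ if it is a $\subseteq$-minimal model of $P^X$. Here $+$ and $-$ are constants and vertex names are constants. The instance $\tau((V,E,\sigma),\mu)$ is the set of facts: $\mathit{vertex}(i)$ for each $i\in V$; $\mathit{edge}(j,i)$ for each $j\rightarrow i$ in $E$; $\mathit{observedE}(j,i,s)$ whenever $\sigma(j,i)=s$ is defined; $\mathit{observedV}(i,s)$ whenever $\mu(i)=s$ is defined; $\mathit{input}(i)$ for each input vertex $i$. The program $P_D$ consists of the rules $\mathit{labelV}(V,S)\leftarrow \mathit{observedV}(V,S)$; $\mathit{labelE}(U,V,S)\leftarrow \mathit{observedE}(U,V,S)$; $\mathit{active}(V);\mathit{inactive}(V)\leftarrow \mathit{vertex}(V),\mathit{not}\ \mathit{input}(V)$; $\mathit{edgeMIC}(U,V)\leftarrow \mathit{edge}(U,V),\mathit{active}(V)$; $\mathit{vertexMIC}(U)\leftarrow \mathit{edgeMIC}(U,V)$; $\mathit{vertexMIC}(V)\leftarrow \mathit{active}(V)$; $\mathit{labelV}(V,+);\mathit{labelV}(V,-)\leftarrow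 \mathit{vertexMIC}(V)$; $\mathit{labelE}(U,V,+);\mathit{labelE}(U,V,-)\leftarrow \mathit{edgeMIC}(U,V)$; $\mathit{opposite}(U,V)\leftarrow \mathit{labelE}(U,V,-),\mathit{labelV}(U,S),\mathit{labelV}(V,S)$; $\mathit{opposite}(U,V)\leftarrow \mathit{labelE}(U,V,+),\mathit{labelV}(U,S),\mathit{labelV}(V,T),S\neq T$; $\mathit{bottom}\leftarrow \mathit{active}(V),\mathit{opposite}(U,V):\mathit{edge}(U,V)$; $\leftarrow \mathit{not}\ \mathit{bottom}$; $\mathit{labelV}(V,+)\leftarrow \mathit{bottom},\mathit{vertex}(V)$; $\mathit{labelV}(V,-)\leftarrow \mathit{bottom},\mathit{vertex}(V)$; $\mathit{labelE}(U,V,+)\leftarrow \mathit{bottom},\mathit{edge}(U,V)$; $\mathit{labelE}(U,V,-)\leftarrow \mathit{bottom},\mathit{edge}(U,V)$; $\mathit{labelV'}(W,V,+);\mathit{labelV'}(W,V,-)\leftarrow \mathit{active}(W),\mathit{vertexMIC}(V)$; $\mathit{labelE'}(W,U,V,+);\mathit{labelE'}(W,U,V,-)\leftarrow \mathit{active}(W),\mathit{edgeMIC}(U,V)$; $\mathit{labelV'}(W,V,S)\leftarrow \mathit{active}(W),\mathit{observedV}(V,S)$; $\mathit{labelE'}(W,U,V,S)\leftarrow \mathit{active}(W),\mathit{observedE}(U,V,S)$; $\mathit{receive'}(W,V,+)\leftarrow \mathit{labelE'}(W,U,V,S),\mathit{labelV'}(W,U,S),V\neq W$; $\mathit{receive'}(W,V,-)\leftarrow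 \mathit{labelE'}(W,U,V,S),\mathit{labelV'}(W,U,T),V\neq W,S\neq T$; $\leftarrow \mathit{labelV'}(W,V,S),\mathit{active}(V),V\neq W,\mathit{not}\ \mathit{receive'}(W,V,S)$. *)

theory Defs
  imports Main
begin

datatype sign = Plus | Minus

fun smult :: "sign \<Rightarrow> sign \<Rightarrow> sign" where
  "smult Plus s = s"
| "smult Minus Plus = Minus"
| "smult Minus Minus = Plus"

definition influence_graph ::
  "'v set \<Rightarrow> ('v \<times> 'v) set \<Rightarrow> ('v \<times> 'v \<rightharpoonup> sign) \<Rightarrow> 'v set \<Rightarrow> bool" where
  "influence_graph V E \<sigma> Inp \<longleftrightarrow>
     finite V \<and> E \<subseteq> V \<times> V \<and> dom \<sigma> \<subseteq> E \<and> Inp \<subseteq> V"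

definition vertex_labeling :: "'v set \<Rightarrow> ('v \<rightharpoonup> sign) \<Rightarrow> bool" where
  "vertex_labeling V \<mu> \<longleftrightarrow> dom \<mu> \<subseteq> V"

definition ext_E :: "('v \<times> 'v) set \<Rightarrow> ('v \<times> 'v \<rightharpoonup> sign) \<Rightarrow> ('v \<times> 'v \<Rightarrow> sign) \<Rightarrow> bool" where
  "ext_E E \<sigma> \<sigma>' \<longleftrightarrow> (\<forall>e\<in>E. \<forall>s. \<sigma> e = Some s \<longrightarrow> \<sigma>' e = s)"

definition ext_V :: "'v set \<Rightarrow> ('v \<rightharpoonup> sign) \<Rightarrow> ('v \<Rightarrow> sign) \<Rightarrow> bool" where
  "ext_V V \<mu> \<mu>' \<longleftrightarrow> (\<forall>i\<in>V. \<forall>s. \<mu> i = Some s \<longrightarrow> \<mu>' i = s)"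

definition consistent_at ::
  "('v \<times> 'v) set \<Rightarrow> ('v \<times> 'v \<Rightarrow> sign) \<Rightarrow> ('v \<Rightarrow> sign) \<Rightarrow> 'v \<Rightarrow> bool" where
  "consistent_at E \<sigma>' \<mu>' i \<longleftrightarrow> (\<exists>j. (j, i) \<in> E \<and> \<mu>' i = smult (\<mu>' j) (\<sigma>' (j, i)))"

definition MIC ::
  "'v set \<Rightarrow> ('v \<times> 'v) set \<Rightarrow> ('v \<times> 'v \<rightharpoonup> sign) \<Rightarrow> 'v set \<Rightarrow> ('v \<rightharpoonup> sign) \<Rightarrow> 'v set \<Rightarrow> bool" where
  "MIC V E \<sigma> Inp \<mu> W \<longleftrightarrow>
     W \<subseteq> V \<and>
     (\<forall>\<sigma>' \<mu>'. ext_E E \<sigma> \<sigma>' \<and> ext_V V \<mu> \<mu>' \<longrightarrow>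
        (\<exists>i\<in>W. i \<notin> Inp \<and> \<not> consistent_at E \<sigma>' \<mu>' i)) \<and>
     (\<forall>W'. W' \<subset> W \<longrightarrow>
        (\<exists>\<sigma>' \<mu>'. ext_E E \<sigma> \<sigma>' \<and> ext_V V \<mu> \<mu>' \<and>
           (\<forall>i\<in>W'. i \<notin> Inp \<longrightarrow> consistent_at E \<sigma>' \<mu>' i)))"

text \<open>A ground rule is (head, positive body, negative body).\<close>
type_synonym 'a rule = "'a set \<times> 'a set \<times> 'a set"

definition reduct :: "'a rule set \<Rightarrow> 'a set \<Rightarrow> ('a set \<times> 'a set) set" where
  "reduct P X = {(H, B) | H B N. (H, B, N) \<in> P \<and> N \<inter> X = {}}"

definition is_model :: "'a set \<Rightarrow> ('a set \<times> 'a set) set \<Rightarrow> bool" where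
  "is_model M Q \<longleftrightarrow> (\<forall>(H, B) \<in> Q. B \<subseteq> M \<longrightarrow> H \<inter> M \<noteq> {})"

definition answer_set :: "'a rule set \<Rightarrow> 'a set \<Rightarrow> bool" where
  "answer_set P X \<longleftrightarrow> is_model X (reduct P X) \<and> (\<forall>M. M \<subset> X \<longrightarrow> \<not> is_model M (reduct P X))"

datatype 'v const = Vx 'v | Sg sign

datatype 'v atom =
    A_vertex "'v const"
  | A_edge "'v const" "'v const"
  | A_observedE "'v const" "'v const" "'v const"
  | A_observedV "'v const" "'v const"
  | A_input "'v const"
  | A_labelV "'v const" "'v const"
  | A_labelE "'v const" "'v const" "'v const"
  | A_active "'v const"
  | A_inactive "'v const"
  | A_edgeMIC "'v const" "'v const"
  | A_vertexMIC "'v const"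
  | A_opposite "'v const" "'v const"
  | A_bottom
  | A_labelV' "'v const" "'v const" "'v const"
  | A_labelE' "'v const" "'v const" "'v const" "'v const"
  | A_receive' "'v const" "'v const" "'v const"


definition tau_facts ::
  "'v set \<Rightarrow> ('v \<times> 'v) set \<Rightarrow> ('v \<times> 'v \<rightharpoonup> sign) \<Rightarrow> 'v set \<Rightarrow> ('v \<rightharpoonup> sign) \<Rightarrow> 'v atom set" where
  "tau_facts V E \<sigma> Inp \<mu> =
     {A_vertex (Vx i) | i. i \<in> V}
   \<union> {A_edge (Vx j) (Vx i) | j i. (j, i) \<in> E}
   \<union> {A_observedE (Vx j) (Vx i) (Sg s) | j i s. (j, i) \<in> E \<and> \<sigma> (j, i) = Some s}
   \<union> {A_observedV (Vx i) (Sg s) | i s. i \<in> V \<and> \<mu> i = Some s}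
   \<union> {A_input (Vx i) | i. i \<in> Inp}"

definition consts_of :: "'v set \<Rightarrow> 'v const set" where
  "consts_of V = Vx ` V \<union> {Sg Plus, Sg Minus}"

text \<open>Grounding of P_D \<union> tau over the constants consts_of V.
  The conditional literal opposite(U,V):edge(U,V) expands, for V = c, to all
  opposite(u,c) with edge(u,c) a fact of the program.\<close>
definition ground_PD ::
  "'v set \<Rightarrow> ('v \<times> 'v) set \<Rightarrow> ('v \<times> 'v \<rightharpoonup> sign) \<Rightarrow> 'v set \<Rightarrow> ('v \<rightharpoonup> sign) \<Rightarrow> 'v atom rule set" where
  "ground_PD V E \<sigma> Inp \<mu> = (let C = consts_of V; F = tau_facts V E \<sigma> Inp \<mu>;
      P = Sg Plus; M = Sg Minus in
     {({a}, {}, {}) | a. a \<in> F}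
   \<union> {({A_labelV v s}, {A_observedV v s}, {}) | v s. v \<in> C \<and> s \<in> C}
   \<union> {({A_labelE u v s}, {A_observedE u v s}, {}) | u v s. u \<in> C \<and> v \<in> C \<and> s \<in> C}
   \<union> {({A_active v, A_inactive v}, {A_vertex v}, {A_input v}) | v. v \<in> C}
   \<union> {({A_edgeMIC u v}, {A_edge u v, A_active v}, {}) | u v. u \<in> C \<and> v \<in> C}
   \<union> {({A_vertexMIC u}, {A_edgeMIC u v}, {}) | u v. u \<in> C \<and> v \<in> C}
   \<union> {({A_vertexMIC v}, {A_active v}, {}) | v. v \<in> C}
   \<union> {({A_labelV v P, A_labelV v M}, {A_vertexMIC v}, {}) | v. v \<in> C}
   \<union> {({A_labelE u v P, A_labelE u v M}, {A_edgeMIC u v}, {}) | u v. u \<in> C \<and> v \<in> C}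
   \<union> {({A_opposite u v}, {A_labelE u v M, A_labelV u s, A_labelV v s}, {})
        | u v s. u \<in> C \<and> v \<in> C \<and> s \<in> C}
   \<union> {({A_opposite u v}, {A_labelE u v P, A_labelV u s, A_labelV v t}, {})
        | u v s t. u \<in> C \<and> v \<in> C \<and> s \<in> C \<and> t \<in> C \<and> s \<noteq> t}
   \<union> {({A_bottom}, insert (A_active v) {A_opposite u v | u. A_edge u v \<in> F}, {}) | v. v \<in> C}
   \<union> {({}, {}, {A_bottom})}
   \<union> {({A_labelV v P}, {A_bottom, A_vertex v}, {}) | v. v \<in> C}
   \<union> {({A_labelV v M}, {A_bottom, A_vertex v}, {}) | v. v \<in> C}
   \<union> {({A_labelE u v P}, {A_bottom, A_edge u v}, {}) | u v. u \<in> C \<and> v \<in> C}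
   \<union> {({A_labelE u v M}, {A_bottom, A_edge u v}, {}) | u v. u \<in> C \<and> v \<in> C}
   \<union> {({A_labelV' w v P, A_labelV' w v M}, {A_active w, A_vertexMIC v}, {})
        | w v. w \<in> C \<and> v \<in> C}
   \<union> {({A_labelE' w u v P, A_labelE' w u v M}, {A_active w, A_edgeMIC u v}, {})
        | w u v. w \<in> C \<and> u \<in> C \<and> v \<in> C}
   \<union> {({A_labelV' w v s}, {A_active w, A_observedV v s}, {})
        | w v s. w \<in> C \<and> v \<in> C \<and> s \<in> C}
   \<union> {({A_labelE' w u v s}, {A_active w, A_observedE u v s}, {})
        | w u v s. w \<in> C \<and> u \<in> C \<and> v \<in> C \<and> s \<in> C}
   \<union> {({A_receive' w v P}, {A_labelE' w u v s, A_labelV' w u s}, {})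
        | w u v s. w \<in> C \<and> u \<in> C \<and> v \<in> C \<and> s \<in> C \<and> v \<noteq> w}
   \<union> {({A_receive' w v M}, {A_labelE' w u v s, A_labelV' w u t}, {})
        | w u v s t. w \<in> C \<and> u \<in> C \<and> v \<in> C \<and> s \<in> C \<and> t \<in> C \<and> v \<noteq> w \<and> s \<noteq> t}
   \<union> {({}, {A_labelV' w v s, A_active v}, {A_receive' w v s})
        | w v s. w \<in> C \<and> v \<in> C \<and> s \<in> C \<and> v \<noteq> w})"

end

theory Submission
  imports Defs
begin

text \<open>The constraint on bottom puts bottom into every answer set X, and the saturation rules
  then make all label and opposite atoms of the graph true. If some total extension (m, s) made
  every active vertex consistent, the atoms of X agreeing with (m, s) would be closed under the
  reduct without containing bottom (whose rule needs an active vertex all of whose incoming edges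
  are opposite), contradicting the minimality of X; so the active vertices form an
  inconsistent set. For minimality of the core, drop an active vertex w: the atoms labelV'(w, .)
  and labelE'(w, .) choose labelings extending the observed ones, and the last constraint forces
  every other active vertex to receive its chosen sign along some edge, i.e. to be consistent.\<close>

lemma in_reduct_iff: "(H, B) \<in> reduct P X \<longleftrightarrow> (\<exists>N. (H, B, N) \<in> P \<and> N \<inter> X = {})"
  unfolding reduct_def by blast

lemma answer_set_satisfies_rule:
  assumes "answer_set P X" and "(H, B, N) \<in> P" and "N \<inter> X = {}" and "B \<subseteq> X"
  shows "H \<inter> X \<noteq> {}"
proof -
  have "is_model X (reduct P X)" using assms(1) unfolding answer_set_def by blast
  moreover have "(H, B) \<in> reduct P X" using assms(2,3) in_reduct_iff by blast
  ultimately show ?thesis using assms(4) unfolding is_model_def by blast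
qed

lemma answer_set_supported:
  assumes "answer_set P X" and "a \<in> X"
  obtains H B N where "(H, B, N) \<in> P" "N \<inter> X = {}" "B \<subseteq> X" "a \<in> H"
    and "\<And>b. b \<in> H \<Longrightarrow> b \<in> X \<Longrightarrow> b = a"
proof -
  have "X - {a} \<subset> X" using assms(2) by blast
  then have "\<not> is_model (X - {a}) (reduct P X)" using assms(1) unfolding answer_set_def by blast
  then obtain H B where "(H, B) \<in> reduct P X" "B \<subseteq> X - {a}" "H \<inter> (X - {a}) = {}"
    unfolding is_model_def by blast
  moreover from this obtain N where "(H, B, N) \<in> P" "N \<inter> X = {}" using in_reduct_iff by blast
  moreover from calculation have "H \<inter> X \<noteq> {}" using answer_set_satisfies_rule[OF assms(1)] by blast
  ultimately show thesis using that by blast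
qed

text \<open>Minimality as an induction principle: a property preserved by every rule applicable
  in X holds throughout X.\<close>
lemma answer_set_invariant:
  assumes "answer_set P X"
    and step: "\<And>H B N. (H, B, N) \<in> P \<Longrightarrow> N \<inter> X = {} \<Longrightarrow> B \<subseteq> {a \<in> X. Q a} \<Longrightarrow>
                 H \<inter> {a \<in> X. Q a} \<noteq> {}"
    and "a \<in> X"
  shows "Q a"
proof -
  have "is_model {a \<in> X. Q a} (reduct P X)"
    unfolding is_model_def by (auto simp: in_reduct_iff dest: step)
  with assms(1) have "\<not> {a \<in> X. Q a} \<subset> X" unfolding answer_set_def by blast
  with assms(3) show ?thesis by blast
qed

lemma fact_rule_in_ground_PD:
  "a \<in> tau_facts V E \<sigma> Inp \<mu> \<Longrightarrow> ({a}, {}, {}) \<in> ground_PD V E \<sigma> Inp \<mu>"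
  unfolding ground_PD_def Let_def by (intro UnI1) blast

lemma bottom_constraint_in_ground_PD: "({}, {}, {A_bottom}) \<in> ground_PD V E \<sigma> Inp \<mu>"
  unfolding ground_PD_def Let_def by simp

lemma saturate_labelV_in_ground_PD:
  "i \<in> V \<Longrightarrow> ({A_labelV (Vx i) (Sg s)}, {A_bottom, A_vertex (Vx i)}, {}) \<in> ground_PD V E \<sigma> Inp \<mu>"
  unfolding ground_PD_def Let_def consts_of_def by (cases s) auto

lemma saturate_labelE_in_ground_PD:
  "j \<in> V \<Longrightarrow> i \<in> V \<Longrightarrow>
   ({A_labelE (Vx j) (Vx i) (Sg s)}, {A_bottom, A_edge (Vx j) (Vx i)}, {}) \<in> ground_PD V E \<sigma> Inp \<mu>"
  unfolding ground_PD_def Let_def consts_of_def by (cases s) auto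

lemma opposite_rule_in_ground_PD:
  "j \<in> V \<Longrightarrow> i \<in> V \<Longrightarrow>
   ({A_opposite (Vx j) (Vx i)},
    {A_labelE (Vx j) (Vx i) (Sg Minus), A_labelV (Vx j) (Sg Plus), A_labelV (Vx i) (Sg Plus)}, {})
     \<in> ground_PD V E \<sigma> Inp \<mu>"
  unfolding ground_PD_def Let_def consts_of_def by auto

lemma vertexMIC_rule_in_ground_PD:
  "i \<in> V \<Longrightarrow> ({A_vertexMIC (Vx i)}, {A_active (Vx i)}, {}) \<in> ground_PD V E \<sigma> Inp \<mu>"
  unfolding ground_PD_def Let_def consts_of_def by auto

lemma guess_labelV'_in_ground_PD:
  "w \<in> V \<Longrightarrow> i \<in> V \<Longrightarrow>
   ({A_labelV' (Vx w) (Vx i) (Sg Plus), A_labelV' (Vx w) (Vx i) (Sg Minus)},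
    {A_active (Vx w), A_vertexMIC (Vx i)}, {}) \<in> ground_PD V E \<sigma> Inp \<mu>"
  unfolding ground_PD_def Let_def consts_of_def by auto

lemma observed_labelV'_in_ground_PD:
  "w \<in> V \<Longrightarrow> i \<in> V \<Longrightarrow>
   ({A_labelV' (Vx w) (Vx i) (Sg s)}, {A_active (Vx w), A_observedV (Vx i) (Sg s)}, {})
     \<in> ground_PD V E \<sigma> Inp \<mu>"
  unfolding ground_PD_def Let_def consts_of_def by (cases s) auto

lemma observed_labelE'_in_ground_PD:
  "w \<in> V \<Longrightarrow> j \<in> V \<Longrightarrow> i \<in> V \<Longrightarrow>
   ({A_labelE' (Vx w) (Vx j) (Vx i) (Sg s)}, {A_active (Vx w), A_observedE (Vx j) (Vx i) (Sg s)}, {})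
     \<in> ground_PD V E \<sigma> Inp \<mu>"
  unfolding ground_PD_def Let_def consts_of_def by (cases s) auto

lemma receive'_constraint_in_ground_PD:
  "w \<in> V \<Longrightarrow> i \<in> V \<Longrightarrow> i \<noteq> w \<Longrightarrow>
   ({}, {A_labelV' (Vx w) (Vx i) (Sg s), A_active (Vx i)}, {A_receive' (Vx w) (Vx i) (Sg s)})
     \<in> ground_PD V E \<sigma> Inp \<mu>"
  unfolding ground_PD_def Let_def consts_of_def by (cases s) auto

lemma ground_PD_head_labelV:
  "(H, B, N) \<in> ground_PD V E \<sigma> Inp \<mu> \<Longrightarrow> A_labelV v x \<in> H \<Longrightarrow>
   (H = {A_labelV v x} \<and> B = {A_observedV v x}) \<or>
   (H = {A_labelV v (Sg Plus), A_labelV v (Sg Minus)} \<and> B = {A_vertexMIC v}) \<or> A_bottom \<in> B"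
  unfolding ground_PD_def Let_def by (elim UnE) (auto simp: tau_facts_def)

lemma ground_PD_head_labelE:
  "(H, B, N) \<in> ground_PD V E \<sigma> Inp \<mu> \<Longrightarrow> A_labelE u v x \<in> H \<Longrightarrow>
   (H = {A_labelE u v x} \<and> B = {A_observedE u v x}) \<or>
   (H = {A_labelE u v (Sg Plus), A_labelE u v (Sg Minus)} \<and> B = {A_edgeMIC u v}) \<or> A_bottom \<in> B"
  unfolding ground_PD_def Let_def by (elim UnE) (auto simp: tau_facts_def)

lemma ground_PD_head_opposite:
  "(H, B, N) \<in> ground_PD V E \<sigma> Inp \<mu> \<Longrightarrow> A_opposite u v \<in> H \<Longrightarrow>
   (\<exists>x. B = {A_labelE u v (Sg Minus), A_labelV u x, A_labelV v x}) \<or>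
   (\<exists>x y. x \<noteq> y \<and> B = {A_labelE u v (Sg Plus), A_labelV u x, A_labelV v y})"
  unfolding ground_PD_def Let_def by (elim UnE) (auto simp: tau_facts_def)

lemma ground_PD_head_bottom:
  "(H, B, N) \<in> ground_PD V E \<sigma> Inp \<mu> \<Longrightarrow> A_bottom \<in> H \<Longrightarrow>
   \<exists>v. B = insert (A_active v) {A_opposite u v | u. A_edge u v \<in> tau_facts V E \<sigma> Inp \<mu>}"
  unfolding ground_PD_def Let_def by (elim UnE) (auto simp: tau_facts_def)

lemma ground_PD_head_labelV':
  "(H, B, N) \<in> ground_PD V E \<sigma> Inp \<mu> \<Longrightarrow> A_labelV' w v x \<in> H \<Longrightarrow>
   H = {A_labelV' w v (Sg Plus), A_labelV' w v (Sg Minus)} \<or> A_observedV v x \<in> B"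
  unfolding ground_PD_def Let_def by (elim UnE) (auto simp: tau_facts_def)

lemma ground_PD_head_labelE':
  "(H, B, N) \<in> ground_PD V E \<sigma> Inp \<mu> \<Longrightarrow> A_labelE' w u v x \<in> H \<Longrightarrow>
   H = {A_labelE' w u v (Sg Plus), A_labelE' w u v (Sg Minus)} \<or> A_observedE u v x \<in> B"
  unfolding ground_PD_def Let_def by (elim UnE) (auto simp: tau_facts_def)

lemma ground_PD_head_receive':
  "(H, B, N) \<in> ground_PD V E \<sigma> Inp \<mu> \<Longrightarrow> A_receive' w v x \<in> H \<Longrightarrow>
   \<exists>u x1 x2. A_labelE' w u v x1 \<in> B \<and> A_labelV' w u x2 \<in> B \<and>
     ((x = Sg Plus \<and> x1 = x2) \<or> (x = Sg Minus \<and> x1 \<noteq> x2))"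
  unfolding ground_PD_def Let_def by (elim UnE) (auto simp: tau_facts_def)

text \<open>An over-approximation of the atoms derivable from the program; minimality confines
  every answer set to it.\<close>
primrec admissible_atom ::
  "'v set \<Rightarrow> ('v \<times> 'v) set \<Rightarrow> ('v \<times> 'v \<rightharpoonup> sign) \<Rightarrow> 'v set \<Rightarrow> ('v \<rightharpoonup> sign) \<Rightarrow> 'v atom \<Rightarrow> bool"
where
  "admissible_atom V E \<sigma> Inp \<mu> (A_vertex v) \<longleftrightarrow> (\<exists>i. v = Vx i \<and> i \<in> V)"
| "admissible_atom V E \<sigma> Inp \<mu> (A_edge u v) \<longleftrightarrow> (\<exists>j i. u = Vx j \<and> v = Vx i \<and> (j, i) \<in> E)"
| "admissible_atom V E \<sigma> Inp \<mu> (A_observedE u v x) \<longleftrightarrow>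
     (\<exists>j i s. u = Vx j \<and> v = Vx i \<and> x = Sg s \<and> (j, i) \<in> E \<and> \<sigma> (j, i) = Some s)"
| "admissible_atom V E \<sigma> Inp \<mu> (A_observedV v x) \<longleftrightarrow>
     (\<exists>i s. v = Vx i \<and> x = Sg s \<and> i \<in> V \<and> \<mu> i = Some s)"
| "admissible_atom V E \<sigma> Inp \<mu> (A_input v) \<longleftrightarrow> (\<exists>i. v = Vx i \<and> i \<in> Inp)"
| "admissible_atom V E \<sigma> Inp \<mu> (A_labelV v x) \<longleftrightarrow> (\<exists>i s. v = Vx i \<and> x = Sg s \<and> i \<in> V)"
| "admissible_atom V E \<sigma> Inp \<mu> (A_labelE u v x) \<longleftrightarrow>
     (\<exists>j i s. u = Vx j \<and> v = Vx i \<and> x = Sg s \<and> (j, i) \<in> E)"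
| "admissible_atom V E \<sigma> Inp \<mu> (A_active v) \<longleftrightarrow> (\<exists>i. v = Vx i \<and> i \<in> V \<and> i \<notin> Inp)"
| "admissible_atom V E \<sigma> Inp \<mu> (A_inactive v) \<longleftrightarrow> (\<exists>i. v = Vx i \<and> i \<in> V \<and> i \<notin> Inp)"
| "admissible_atom V E \<sigma> Inp \<mu> (A_edgeMIC u v) \<longleftrightarrow> (\<exists>j i. u = Vx j \<and> v = Vx i \<and> (j, i) \<in> E)"
| "admissible_atom V E \<sigma> Inp \<mu> (A_vertexMIC v) \<longleftrightarrow> (\<exists>i. v = Vx i \<and> i \<in> V)"
| "admissible_atom V E \<sigma> Inp \<mu> (A_opposite u v) \<longleftrightarrow> (\<exists>j i. u = Vx j \<and> v = Vx i \<and> (j, i) \<in> E)"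
| "admissible_atom V E \<sigma> Inp \<mu> A_bottom \<longleftrightarrow> True"
| "admissible_atom V E \<sigma> Inp \<mu> (A_labelV' w v x) \<longleftrightarrow>
     (\<exists>w0 i s. w = Vx w0 \<and> v = Vx i \<and> x = Sg s \<and> i \<in> V)"
| "admissible_atom V E \<sigma> Inp \<mu> (A_labelE' w u v x) \<longleftrightarrow>
     (\<exists>w0 j i s. w = Vx w0 \<and> u = Vx j \<and> v = Vx i \<and> x = Sg s \<and> (j, i) \<in> E)"
| "admissible_atom V E \<sigma> Inp \<mu> (A_receive' w v x) \<longleftrightarrow>
     (\<exists>w0 i s. w = Vx w0 \<and> v = Vx i \<and> x = Sg s)"

lemma Vx_in_consts_of [simp]: "Vx i \<in> consts_of V \<longleftrightarrow> i \<in> V"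
  unfolding consts_of_def by blast

lemma ground_PD_admissible_head:
  assumes "(H, B, N) \<in> ground_PD V E \<sigma> Inp \<mu>"
    and "\<And>i. A_input (Vx i) \<in> N \<Longrightarrow> i \<notin> Inp" and "\<forall>b\<in>B. admissible_atom V E \<sigma> Inp \<mu> b"
    and "h \<in> H"
  shows "admissible_atom V E \<sigma> Inp \<mu> h"
  using assms unfolding ground_PD_def Let_def by (elim UnE) (auto simp: tau_facts_def)

locale PD_answer_set =
  fixes V :: "'v set" and E :: "('v \<times> 'v) set" and \<sigma> :: "'v \<times> 'v \<rightharpoonup> sign"
    and Inp :: "'v set" and \<mu> :: "'v \<rightharpoonup> sign" and X :: "'v atom set"
  assumes edges_within: "E \<subseteq> V \<times> V"
    and answer_set: "answer_set (ground_PD V E \<sigma> Inp \<mu>) X"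
begin

lemma satisfies_rule:
  "(H, B, N) \<in> ground_PD V E \<sigma> Inp \<mu> \<Longrightarrow> N \<inter> X = {} \<Longrightarrow> B \<subseteq> X \<Longrightarrow> H \<inter> X \<noteq> {}"
  using answer_set_satisfies_rule[OF answer_set] .

lemma fact_in: "a \<in> tau_facts V E \<sigma> Inp \<mu> \<Longrightarrow> a \<in> X"
  using satisfies_rule[OF fact_rule_in_ground_PD] by blast

lemma bottom_in: "A_bottom \<in> X"
  using satisfies_rule[OF bottom_constraint_in_ground_PD] by blast

lemma admissible: "a \<in> X \<Longrightarrow> admissible_atom V E \<sigma> Inp \<mu> a"
proof (rule answer_set_invariant[OF answer_set])
  fix H B N
  assume rule: "(H, B, N) \<in> ground_PD V E \<sigma> Inp \<mu>" "N \<inter> X = {}"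
    and body: "B \<subseteq> {a \<in> X. admissible_atom V E \<sigma> Inp \<mu> a}"
  have "i \<notin> Inp" if "A_input (Vx i) \<in> N" for i
    using that rule(2) fact_in[of "A_input (Vx i)"] unfolding tau_facts_def by blast
  with rule body have "\<forall>h\<in>H. admissible_atom V E \<sigma> Inp \<mu> h"
    using ground_PD_admissible_head by blast
  moreover have "H \<inter> X \<noteq> {}" using satisfies_rule rule body by blast
  ultimately show "H \<inter> {a \<in> X. admissible_atom V E \<sigma> Inp \<mu> a} \<noteq> {}" by blast
qed

lemma active_vertex: "A_active (Vx i) \<in> X \<Longrightarrow> i \<in> V \<and> i \<notin> Inp"
  using admissible by fastforce

text \<open>Since bottom holds, the saturation rules make every label and every opposite atom true.\<close>

lemma labelV_in: "i \<in> V \<Longrightarrow> A_labelV (Vx i) (Sg s) \<in> X"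
  using satisfies_rule[OF saturate_labelV_in_ground_PD] bottom_in fact_in[of "A_vertex (Vx i)"]
  unfolding tau_facts_def by blast

lemma labelE_in: "(j, i) \<in> E \<Longrightarrow> A_labelE (Vx j) (Vx i) (Sg s) \<in> X"
  using satisfies_rule[OF saturate_labelE_in_ground_PD] bottom_in fact_in[of "A_edge (Vx j) (Vx i)"]
    edges_within
  unfolding tau_facts_def by blast

lemma opposite_in: "(j, i) \<in> E \<Longrightarrow> A_opposite (Vx j) (Vx i) \<in> X"
  using satisfies_rule[OF opposite_rule_in_ground_PD] labelE_in labelV_in edges_within by blast

end

text \<open>The atoms of X that survive when the saturated labels are cut down to one total labeling
  (m, s): opposite atoms survive only on edges inconsistent under (m, s), bottom never.\<close>
fun agrees_with :: "('v \<Rightarrow> sign) \<Rightarrow> ('v \<times> 'v \<Rightarrow> sign) \<Rightarrow> 'v atom \<Rightarrow> bool" where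
  "agrees_with m s (A_labelV (Vx i) (Sg x)) \<longleftrightarrow> x = m i"
| "agrees_with m s (A_labelE (Vx j) (Vx i) (Sg x)) \<longleftrightarrow> x = s (j, i)"
| "agrees_with m s (A_opposite (Vx j) (Vx i)) \<longleftrightarrow> m i \<noteq> smult (m j) (s (j, i))"
| "agrees_with m s A_bottom \<longleftrightarrow> False"
| "agrees_with m s _ \<longleftrightarrow> True"

locale consistent_extension = PD_answer_set +
  fixes s :: "'v \<times> 'v \<Rightarrow> sign" and m :: "'v \<Rightarrow> sign"
  assumes ext_E: "ext_E E \<sigma> s" and ext_V: "ext_V V \<mu> m"
    and consistent: "\<And>i. A_active (Vx i) \<in> X \<Longrightarrow> consistent_at E s m i"
begin

abbreviation agreeing :: "'v atom set" where
  "agreeing \<equiv> {a \<in> X. agrees_with m s a}"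

lemma labelV_head_agreeing:
  assumes rule: "(H, B, N) \<in> ground_PD V E \<sigma> Inp \<mu>" and body: "B \<subseteq> agreeing"
    and head: "A_labelV v x \<in> H" "A_labelV v x \<in> X"
  shows "H \<inter> agreeing \<noteq> {}"
proof -
  have "A_bottom \<notin> B" using body by auto
  with ground_PD_head_labelV[OF rule head(1)]
  consider "H = {A_labelV v x}" "B = {A_observedV v x}"
    | "H = {A_labelV v (Sg Plus), A_labelV v (Sg Minus)}" "B = {A_vertexMIC v}"
    by metis
  then show ?thesis
  proof cases
    case 1
    with body have "A_observedV v x \<in> X" by blast
    then obtain i x0 where "v = Vx i" "x = Sg x0" "i \<in> V" "\<mu> i = Some x0"
      using admissible by fastforce
    with ext_V have "agrees_with m s (A_labelV v x)" unfolding ext_V_def by simp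
    with head show ?thesis by blast
  next
    case 2
    with body have "A_vertexMIC v \<in> X" by blast
    then obtain i where "v = Vx i" "i \<in> V" using admissible by fastforce
    with 2 have "A_labelV v (Sg (m i)) \<in> H \<inter> agreeing" using labelV_in by (cases "m i") auto
    then show ?thesis by blast
  qed
qed

lemma labelE_head_agreeing:
  assumes rule: "(H, B, N) \<in> ground_PD V E \<sigma> Inp \<mu>" and body: "B \<subseteq> agreeing"
    and head: "A_labelE u v x \<in> H" "A_labelE u v x \<in> X"
  shows "H \<inter> agreeing \<noteq> {}"
proof -
  have "A_bottom \<notin> B" using body by auto
  with ground_PD_head_labelE[OF rule head(1)]
  consider "H = {A_labelE u v x}" "B = {A_observedE u v x}"
    | "H = {A_labelE u v (Sg Plus), A_labelE u v (Sg Minus)}" "B = {A_edgeMIC u v}"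
    by metis
  then show ?thesis
  proof cases
    case 1
    with body have "A_observedE u v x \<in> X" by blast
    then obtain j i x0 where "u = Vx j" "v = Vx i" "x = Sg x0" "(j, i) \<in> E" "\<sigma> (j, i) = Some x0"
      using admissible by fastforce
    with ext_E have "agrees_with m s (A_labelE u v x)" unfolding ext_E_def by simp
    with head show ?thesis by blast
  next
    case 2
    with body have "A_edgeMIC u v \<in> X" by blast
    then obtain j i where "u = Vx j" "v = Vx i" "(j, i) \<in> E" using admissible by fastforce
    with 2 have "A_labelE u v (Sg (s (j, i))) \<in> H \<inter> agreeing"
      using labelE_in by (cases "s (j, i)") auto
    then show ?thesis by blast
  qed
qed

lemma opposite_head_agreeing:
  assumes rule: "(H, B, N) \<in> ground_PD V E \<sigma> Inp \<mu>" and body: "B \<subseteq> agreeing"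
    and head: "A_opposite u v \<in> H" "A_opposite u v \<in> X"
  shows "H \<inter> agreeing \<noteq> {}"
proof -
  obtain e x y where B: "B = {A_labelE u v (Sg e), A_labelV u x, A_labelV v y}"
    and signs: "e = Minus \<and> x = y \<or> e = Plus \<and> x \<noteq> y"
    using ground_PD_head_opposite[OF rule head(1)] by metis
  with body have "A_labelE u v (Sg e) \<in> X" "A_labelV u x \<in> X" "A_labelV v y \<in> X" by auto
  then obtain j i x0 y0 where ji: "u = Vx j" "v = Vx i" and "x = Sg x0" "y = Sg y0"
    using admissible by fastforce
  with B body signs have "s (j, i) = e" "m j = x0" "m i = y0"
    and "e = Minus \<and> x0 = y0 \<or> e = Plus \<and> x0 \<noteq> y0"
    by auto
  then have "agrees_with m s (A_opposite u v)" unfolding ji by (cases x0; cases e) auto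
  with head show ?thesis by blast
qed

lemma bottom_body_not_agreeing:
  assumes rule: "(H, B, N) \<in> ground_PD V E \<sigma> Inp \<mu>" and head: "A_bottom \<in> H"
  shows "\<not> B \<subseteq> agreeing"
proof
  assume body: "B \<subseteq> agreeing"
  obtain v
    where B: "B = insert (A_active v) {A_opposite u v | u. A_edge u v \<in> tau_facts V E \<sigma> Inp \<mu>}"
    using ground_PD_head_bottom[OF rule head] by blast
  with body have "A_active v \<in> X" by blast
  then obtain i where v: "v = Vx i" and "A_active (Vx i) \<in> X" using admissible by fastforce
  then obtain j where edge: "(j, i) \<in> E" and "m i = smult (m j) (s (j, i))"
    using consistent unfolding consistent_at_def by blast
  moreover have "A_opposite (Vx j) (Vx i) \<in> B" using B v edge unfolding tau_facts_def by blast
  ultimately show False using body by auto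
qed

lemma agreeing_head:
  assumes rule: "(H, B, N) \<in> ground_PD V E \<sigma> Inp \<mu>" "N \<inter> X = {}" and body: "B \<subseteq> agreeing"
  shows "H \<inter> agreeing \<noteq> {}"
proof -
  obtain h where h: "h \<in> H" "h \<in> X" using satisfies_rule rule body by blast
  show ?thesis
  proof (cases "agrees_with m s h")
    case True
    with h show ?thesis by blast
  next
    case False
    then consider (labelV) v x where "h = A_labelV v x"
      | (labelE) u v x where "h = A_labelE u v x"
      | (opposite) u v where "h = A_opposite u v" | (bottom) "h = A_bottom"
      by (cases h) auto
    then show ?thesis
    proof cases
      case labelV
      with labelV_head_agreeing rule(1) body h show ?thesis by blast
    next
      case labelE
      with labelE_head_agreeing rule(1) body h show ?thesis by blast
    next
      case opposite
      with opposite_head_agreeing rule(1) body h show ?thesis by blast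
    next
      case bottom
      with bottom_body_not_agreeing rule(1) body h show ?thesis by blast
    qed
  qed
qed

lemma no_consistent_extension: False
  using answer_set_invariant[OF answer_set agreeing_head bottom_in] by simp

end

context PD_answer_set
begin

lemma active_set_inconsistent:
  assumes "ext_E E \<sigma> s" and "ext_V V \<mu> m"
  shows "\<exists>i\<in>{i. A_active (Vx i) \<in> X}. i \<notin> Inp \<and> \<not> consistent_at E s m i"
proof (rule ccontr)
  assume "\<not> ?thesis"
  then have "A_active (Vx i) \<in> X \<Longrightarrow> consistent_at E s m i" for i using active_vertex by blast
  with assms have "consistent_extension V E \<sigma> Inp \<mu> X s m"
    by (intro consistent_extension.intro consistent_extension_axioms.intro PD_answer_set_axioms)
  then show False by (rule consistent_extension.no_consistent_extension)
qed

lemma labelV'_observed: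
  assumes "A_labelV' w (Vx i) (Sg x) \<in> X" and "A_labelV' w (Vx i) (Sg y) \<in> X" and "x \<noteq> y"
  shows "\<mu> i = Some x"
proof -
  obtain H B N where rule: "(H, B, N) \<in> ground_PD V E \<sigma> Inp \<mu>" "N \<inter> X = {}" "B \<subseteq> X"
    and head: "A_labelV' w (Vx i) (Sg x) \<in> H"
      "\<And>b. b \<in> H \<Longrightarrow> b \<in> X \<Longrightarrow> b = A_labelV' w (Vx i) (Sg x)"
    by (rule answer_set_supported[OF answer_set assms(1)]) blast
  have "A_labelV' w (Vx i) (Sg y) \<noteq> A_labelV' w (Vx i) (Sg x)" using assms(3) by simp
  with head(2) assms(2) have "A_labelV' w (Vx i) (Sg y) \<notin> H" by blast
  then have "H \<noteq> {A_labelV' w (Vx i) (Sg Plus), A_labelV' w (Vx i) (Sg Minus)}" by (cases y) auto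
  with head(1) have "A_observedV (Vx i) (Sg x) \<in> B"
    using ground_PD_head_labelV'[OF rule(1)] by metis
  with rule(3) have "A_observedV (Vx i) (Sg x) \<in> X" by blast
  then show ?thesis using admissible by fastforce
qed

lemma labelE'_observed:
  assumes "A_labelE' w (Vx j) (Vx i) (Sg x) \<in> X" and "A_labelE' w (Vx j) (Vx i) (Sg y) \<in> X"
    and "x \<noteq> y"
  shows "\<sigma> (j, i) = Some x"
proof -
  obtain H B N where rule: "(H, B, N) \<in> ground_PD V E \<sigma> Inp \<mu>" "N \<inter> X = {}" "B \<subseteq> X"
    and head: "A_labelE' w (Vx j) (Vx i) (Sg x) \<in> H"
      "\<And>b. b \<in> H \<Longrightarrow> b \<in> X \<Longrightarrow> b = A_labelE' w (Vx j) (Vx i) (Sg x)"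
    by (rule answer_set_supported[OF answer_set assms(1)]) blast
  have "A_labelE' w (Vx j) (Vx i) (Sg y) \<noteq> A_labelE' w (Vx j) (Vx i) (Sg x)" using assms(3) by simp
  with head(2) assms(2) have "A_labelE' w (Vx j) (Vx i) (Sg y) \<notin> H" by blast
  then have "H \<noteq> {A_labelE' w (Vx j) (Vx i) (Sg Plus), A_labelE' w (Vx j) (Vx i) (Sg Minus)}"
    by (cases y) auto
  with head(1) have "A_observedE (Vx j) (Vx i) (Sg x) \<in> B"
    using ground_PD_head_labelE'[OF rule(1)] by metis
  with rule(3) have "A_observedE (Vx j) (Vx i) (Sg x) \<in> X" by blast
  then show ?thesis using admissible by fastforce
qed

text \<open>The primed atoms of an active vertex w guess a labeling under which the active vertices
  other than w are consistent; by the two lemmas above at most one sign is guessed per vertex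
  and edge.\<close>

definition witness_vertex_label :: "'v \<Rightarrow> 'v \<Rightarrow> sign" where
  "witness_vertex_label w i = (if A_labelV' (Vx w) (Vx i) (Sg Minus) \<in> X then Minus else Plus)"

definition witness_edge_label :: "'v \<Rightarrow> 'v \<times> 'v \<Rightarrow> sign" where
  "witness_edge_label w e =
     (if A_labelE' (Vx w) (Vx (fst e)) (Vx (snd e)) (Sg Minus) \<in> X then Minus else Plus)"

lemma witness_vertex_label_eq:
  assumes "A_labelV' (Vx w) (Vx i) (Sg x) \<in> X"
  shows "witness_vertex_label w i = x"
  using assms labelV'_observed[OF assms, of Minus] labelV'_observed[of "Vx w" i Minus x]
  unfolding witness_vertex_label_def by (cases x) auto

lemma witness_edge_label_eq:
  assumes "A_labelE' (Vx w) (Vx j) (Vx i) (Sg x) \<in> X"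
  shows "witness_edge_label w (j, i) = x"
  using assms labelE'_observed[OF assms, of Minus] labelE'_observed[of "Vx w" j i Minus x]
  unfolding witness_edge_label_def by (cases x) auto

lemma ext_V_witness:
  assumes active: "A_active (Vx w) \<in> X"
  shows "ext_V V \<mu> (witness_vertex_label w)"
  unfolding ext_V_def
proof (intro ballI allI impI)
  fix i x
  assume "i \<in> V" and "\<mu> i = Some x"
  then have "A_observedV (Vx i) (Sg x) \<in> X" using fact_in unfolding tau_facts_def by blast
  moreover have "w \<in> V" using active_vertex active by blast
  ultimately have "A_labelV' (Vx w) (Vx i) (Sg x) \<in> X"
    using satisfies_rule[OF observed_labelV'_in_ground_PD[OF \<open>w \<in> V\<close> \<open>i \<in> V\<close>]] active
    by blast
  then show "witness_vertex_label w i = x" by (rule witness_vertex_label_eq)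
qed

lemma ext_E_witness:
  assumes active: "A_active (Vx w) \<in> X"
  shows "ext_E E \<sigma> (witness_edge_label w)"
  unfolding ext_E_def
proof (intro ballI allI impI)
  fix e x
  assume e: "e \<in> E" "\<sigma> e = Some x"
  obtain j i where ji: "e = (j, i)" by (cases e)
  have observed: "A_observedE (Vx j) (Vx i) (Sg x) \<in> X"
    using e unfolding ji by (intro fact_in) (auto simp: tau_facts_def)
  have "w \<in> V" "j \<in> V" "i \<in> V"
    using active_vertex active edges_within e(1) unfolding ji by blast+
  then have "A_labelE' (Vx w) (Vx j) (Vx i) (Sg x) \<in> X"
    using satisfies_rule[OF observed_labelE'_in_ground_PD] active observed by blast
  then show "witness_edge_label w e = x" unfolding ji by (rule witness_edge_label_eq)
qed

lemma witness_consistent: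
  assumes w: "A_active (Vx w) \<in> X" and i: "A_active (Vx i) \<in> X" "i \<noteq> w"
  shows "consistent_at E (witness_edge_label w) (witness_vertex_label w) i"
proof -
  have "w \<in> V" "i \<in> V" using active_vertex w i by blast+
  have "A_vertexMIC (Vx i) \<in> X"
    using satisfies_rule[OF vertexMIC_rule_in_ground_PD[OF \<open>i \<in> V\<close>]] i(1) by blast
  then obtain x where label: "A_labelV' (Vx w) (Vx i) (Sg x) \<in> X"
    using satisfies_rule[OF guess_labelV'_in_ground_PD[OF \<open>w \<in> V\<close> \<open>i \<in> V\<close>]] w by blast
  have "A_receive' (Vx w) (Vx i) (Sg x) \<in> X"
    using satisfies_rule[OF receive'_constraint_in_ground_PD[OF \<open>w \<in> V\<close> \<open>i \<in> V\<close> i(2)]]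
      label i(1) by blast
  then obtain H B N where rule: "(H, B, N) \<in> ground_PD V E \<sigma> Inp \<mu>" "B \<subseteq> X"
    and "A_receive' (Vx w) (Vx i) (Sg x) \<in> H"
    by (rule answer_set_supported[OF answer_set]) blast
  then obtain u x1 x2
    where body: "A_labelE' (Vx w) u (Vx i) x1 \<in> X" "A_labelV' (Vx w) u x2 \<in> X"
    and signs: "Sg x = Sg Plus \<and> x1 = x2 \<or> Sg x = Sg Minus \<and> x1 \<noteq> x2"
    using ground_PD_head_receive' by blast
  then obtain j e y where "u = Vx j" "x1 = Sg e" "x2 = Sg y" and edge: "(j, i) \<in> E"
    using admissible[OF body(1)] admissible[OF body(2)] by auto
  with body label have "witness_edge_label w (j, i) = e" "witness_vertex_label w j = y"
    "witness_vertex_label w i = x"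
    using witness_edge_label_eq witness_vertex_label_eq by auto
  with signs \<open>x1 = Sg e\<close> \<open>x2 = Sg y\<close> edge show ?thesis
    unfolding consistent_at_def by (cases e; cases y; cases x) auto
qed

lemma proper_subset_consistent:
  assumes "W' \<subset> {i. A_active (Vx i) \<in> X}"
  shows "\<exists>\<sigma>' \<mu>'. ext_E E \<sigma> \<sigma>' \<and> ext_V V \<mu> \<mu>' \<and>
           (\<forall>i\<in>W'. i \<notin> Inp \<longrightarrow> consistent_at E \<sigma>' \<mu>' i)"
proof -
  obtain w where "A_active (Vx w) \<in> X" "w \<notin> W'" using assms by blast
  then show ?thesis
    using ext_E_witness ext_V_witness witness_consistent assms by blast
qed

end

theorem theorem3:
  fixes V :: "'v set" and E :: "('v \<times> 'v) set" and \<sigma> :: "'v \<times> 'v \<rightharpoonup> sign"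
    and Inp :: "'v set" and \<mu> :: "'v \<rightharpoonup> sign" and X :: "'v atom set"
  assumes "influence_graph V E \<sigma> Inp"
    and "vertex_labeling V \<mu>"
    and "answer_set (ground_PD V E \<sigma> Inp \<mu>) X"
  shows "MIC V E \<sigma> Inp \<mu> {i. A_active (Vx i) \<in> X}"
proof -
  interpret PD_answer_set V E \<sigma> Inp \<mu> X
    using assms(1,3) unfolding influence_graph_def by unfold_locales blast+
  have "{i. A_active (Vx i) \<in> X} \<subseteq> V" using active_vertex by blast
  then show ?thesis
    unfolding MIC_def using active_set_inconsistent proper_subset_consistent by blast
qed

end
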